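(* Let $A$ be a unital $\mathrm{C}^*$-algebra, $\rho\in\mathcal{R}(A)$, $a\in A$, $\xi\in\mathcal{H}_A$ and $\epsilon>0$. Then the set \[ U(\rho\mid a,\xi,\epsilon)=\{[\rho'] : \rho'\in\mathcal{R}(A),\ \|(\rho-\rho')(a)\xi\|<\epsilon\} \] is open in $\hat{A}=\mathcal{R}(A)/\!\sim$.
   Context: Let $\mathcal{H}_A$ be a fixed Hilbert space of dimension equal to the cardinal $\kappa$ of a dense subset of $A$. A railway representation of $A$ is a representation on $\mathcal{H}_A$ that is unitarily equivalent to the $\kappa$-fold ampliation of some irreducible representation of $A$. $\mathcal{R}(A)$ denotes the set of all railway representations of $A$ on $\mathcal{H}_A$ with the topology of pointwise convergence relative to the strong operator topology, $\sim$ denotes unitary equivalence of representations, and $\hat{A}=\mathcal{R}(A)/\!\sim$ carries the quotient topology (this is canonically homeomorphic to the Fell spectrum of $A$). *)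

theory Defs
  imports "HOL-Analysis.Analysis"
begin

text \<open>A unital C*-algebra is modelled on a type 'a which is a real unital Banach algebra
 (class real_normed_algebra_1 and banach: norm of 1 is 1, submultiplicative norm,
 completeness), together with a complex scalar multiplication smul extending the real one
 and an involution st, satisfying the C*-identity.\<close>

definition unital_cstar_algebra ::
  "(complex \<Rightarrow> 'a::{real_normed_algebra_1,banach} \<Rightarrow> 'a) \<Rightarrow> ('a \<Rightarrow> 'a) \<Rightarrow> bool" where
  "unital_cstar_algebra smul st \<longleftrightarrow>
     (\<forall>r x. smul (complex_of_real r) x = scaleR r x) \<and>
     (\<forall>c d x. smul (c * d) x = smul c (smul d x)) \<and>
     (\<forall>c d x. smul (c + d) x = smul c x + smul d x) \<and>
     (\<forall>c x y. smul c (x + y) = smul c x + smul c y) \<and>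
     (\<forall>c x y. smul c (x * y) = smul c x * y \<and> smul c (x * y) = x * smul c y) \<and>
     (\<forall>c x. norm (smul c x) = cmod c * norm x) \<and>
     (\<forall>x. st (st x) = x) \<and>
     (\<forall>x y. st (x + y) = st x + st y) \<and>
     (\<forall>c x. st (smul c x) = smul (cnj c) (st x)) \<and>
     (\<forall>x y. st (x * y) = st y * st x) \<and>
     (\<forall>x. norm (st x * x) = (norm x)\<^sup>2)"

text \<open>D is a dense subset of A of minimal cardinality (cardinality = density character).\<close>

definition minimal_dense :: "'a::metric_space set \<Rightarrow> bool" where
  "minimal_dense D \<longleftrightarrow> closure D = UNIV \<and>
     (\<forall>E. closure E = UNIV \<longrightarrow> (\<exists>f::'a \<Rightarrow> 'a. inj_on f D \<and> f ` D \<subseteq> E))"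

definition l2 :: "'i set \<Rightarrow> ('i \<Rightarrow> complex) set" where
  "l2 I = {f. (\<forall>i. i \<notin> I \<longrightarrow> f i = 0) \<and> (\<lambda>i. (cmod (f i))\<^sup>2) summable_on I}"

definition l2inner :: "'i set \<Rightarrow> ('i \<Rightarrow> complex) \<Rightarrow> ('i \<Rightarrow> complex) \<Rightarrow> complex" where
  "l2inner I f g = (\<Sum>\<^sub>\<infinity>i\<in>I. cnj (f i) * g i)"

definition l2norm :: "'i set \<Rightarrow> ('i \<Rightarrow> complex) \<Rightarrow> real" where
  "l2norm I f = sqrt (\<Sum>\<^sub>\<infinity>i\<in>I. (cmod (f i))\<^sup>2)"

text \<open>Bounded linear operators on l2(I) (normalised to be 0 off l2(I)).\<close>

definition bounded_op :: "'i set \<Rightarrow> (('i \<Rightarrow> complex) \<Rightarrow> ('i \<Rightarrow> complex)) \<Rightarrow> bool" where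
  "bounded_op I T \<longleftrightarrow>
     (\<forall>f\<in>l2 I. T f \<in> l2 I) \<and>
     (\<forall>f. f \<notin> l2 I \<longrightarrow> T f = (\<lambda>i. 0)) \<and>
     (\<forall>f\<in>l2 I. \<forall>g\<in>l2 I. T (\<lambda>i. f i + g i) = (\<lambda>i. T f i + T g i)) \<and>
     (\<forall>c. \<forall>f\<in>l2 I. T (\<lambda>i. c * f i) = (\<lambda>i. c * T f i)) \<and>
     (\<exists>C. \<forall>f\<in>l2 I. l2norm I (T f) \<le> C * l2norm I f)"

definition is_rep ::
  "(complex \<Rightarrow> 'a::{real_normed_algebra_1,banach} \<Rightarrow> 'a) \<Rightarrow> ('a \<Rightarrow> 'a) \<Rightarrow> 'i set \<Rightarrow>
   ('a \<Rightarrow> ('i \<Rightarrow> complex) \<Rightarrow> ('i \<Rightarrow> complex)) \<Rightarrow> bool" where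
  "is_rep smul st I \<pi> \<longleftrightarrow>
     (\<forall>a. bounded_op I (\<pi> a)) \<and>
     (\<forall>a b. \<forall>f\<in>l2 I. \<pi> (a + b) f = (\<lambda>i. \<pi> a f i + \<pi> b f i)) \<and>
     (\<forall>c a. \<forall>f\<in>l2 I. \<pi> (smul c a) f = (\<lambda>i. c * \<pi> a f i)) \<and>
     (\<forall>a b. \<forall>f\<in>l2 I. \<pi> (a * b) f = \<pi> a (\<pi> b f)) \<and>
     (\<forall>a. \<forall>f\<in>l2 I. \<forall>g\<in>l2 I. l2inner I (\<pi> (st a) f) g = l2inner I f (\<pi> a g))"

definition closed_subspace :: "'i set \<Rightarrow> ('i \<Rightarrow> complex) set \<Rightarrow> bool" where
  "closed_subspace I M \<longleftrightarrow> M \<subseteq> l2 I \<and> (\<lambda>i. 0) \<in> M \<and>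
     (\<forall>f\<in>M. \<forall>g\<in>M. (\<lambda>i. f i + g i) \<in> M) \<and>
     (\<forall>c. \<forall>f\<in>M. (\<lambda>i. c * f i) \<in> M) \<and>
     (\<forall>x f. (\<forall>n. x n \<in> M) \<and> f \<in> l2 I \<and>
            (\<lambda>n. l2norm I (\<lambda>i. x n i - f i)) \<longlonglongrightarrow> 0 \<longrightarrow> f \<in> M)"

definition irreducible_rep ::
  "(complex \<Rightarrow> 'a::{real_normed_algebra_1,banach} \<Rightarrow> 'a) \<Rightarrow> ('a \<Rightarrow> 'a) \<Rightarrow> 'i set \<Rightarrow>
   ('a \<Rightarrow> ('i \<Rightarrow> complex) \<Rightarrow> ('i \<Rightarrow> complex)) \<Rightarrow> bool" where
  "irreducible_rep smul st I \<sigma> \<longleftrightarrow> is_rep smul st I \<sigma> \<and>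
     (\<exists>a. \<exists>f\<in>l2 I. \<sigma> a f \<noteq> (\<lambda>i. 0)) \<and>
     (\<forall>M. closed_subspace I M \<and> (\<forall>a. \<forall>f\<in>M. \<sigma> a f \<in> M) \<longrightarrow>
          M = {\<lambda>i. 0} \<or> M = l2 I)"

definition unitary_op :: "'i set \<Rightarrow> 'k set \<Rightarrow> (('i \<Rightarrow> complex) \<Rightarrow> ('k \<Rightarrow> complex)) \<Rightarrow> bool" where
  "unitary_op I K U \<longleftrightarrow> U ` l2 I = l2 K \<and>
     (\<forall>f\<in>l2 I. \<forall>g\<in>l2 I. U (\<lambda>i. f i + g i) = (\<lambda>k. U f k + U g k)) \<and>
     (\<forall>c. \<forall>f\<in>l2 I. U (\<lambda>i. c * f i) = (\<lambda>k. c * U f k)) \<and>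
     (\<forall>f\<in>l2 I. \<forall>g\<in>l2 I. l2inner K (U f) (U g) = l2inner I f g)"

text \<open>The D-fold ampliation of a representation sigma on l2(J): a representation on
  l2(D x J) = l2(D) tensor l2(J).\<close>

definition ampliation ::
  "'d set \<Rightarrow> 'j set \<Rightarrow> ('a \<Rightarrow> ('j \<Rightarrow> complex) \<Rightarrow> ('j \<Rightarrow> complex)) \<Rightarrow>
   'a \<Rightarrow> ('d \<times> 'j \<Rightarrow> complex) \<Rightarrow> ('d \<times> 'j \<Rightarrow> complex)" where
  "ampliation D J \<sigma> a f = (\<lambda>(d, j). if d \<in> D \<and> j \<in> J then \<sigma> a (\<lambda>j'. f (d, j')) j else 0)"

text \<open>H_A = l2(D), where D is a minimal dense subset of A. Irreducible representations
  are taken on spaces l2(J) with J a subset of A (every irreducible representation has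
  Hilbert dimension at most the density character of A, so this is no restriction).\<close>

definition railway ::
  "(complex \<Rightarrow> 'a::{real_normed_algebra_1,banach} \<Rightarrow> 'a) \<Rightarrow> ('a \<Rightarrow> 'a) \<Rightarrow> 'a set \<Rightarrow>
   ('a \<Rightarrow> ('a \<Rightarrow> complex) \<Rightarrow> ('a \<Rightarrow> complex)) set" where
  "railway smul st D = {\<pi>. is_rep smul st D \<pi> \<and>
     (\<exists>(J::'a set) \<sigma> (U :: ('a \<Rightarrow> complex) \<Rightarrow> ('a \<times> 'a \<Rightarrow> complex)).
        irreducible_rep smul st J \<sigma> \<and> unitary_op D (D \<times> J) U \<and>
        (\<forall>a. \<forall>f\<in>l2 D. U (\<pi> a f) = ampliation D J \<sigma> a (U f)))}"

text \<open>Topology of pointwise convergence relative to the strong operator topology.\<close>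

definition railway_topology ::
  "(complex \<Rightarrow> 'a::{real_normed_algebra_1,banach} \<Rightarrow> 'a) \<Rightarrow> ('a \<Rightarrow> 'a) \<Rightarrow> 'a set \<Rightarrow>
   ('a \<Rightarrow> ('a \<Rightarrow> complex) \<Rightarrow> ('a \<Rightarrow> complex)) topology" where
  "railway_topology smul st D = topology_generated_by
     {{\<pi>' \<in> railway smul st D. l2norm D (\<lambda>i. \<pi>' a \<xi> i - \<pi> a \<xi> i) < e} | \<pi> a \<xi> e.
        \<pi> \<in> railway smul st D \<and> \<xi> \<in> l2 D \<and> e > 0}"

definition unitarily_equiv ::
  "'a set \<Rightarrow> ('b \<Rightarrow> ('a \<Rightarrow> complex) \<Rightarrow> ('a \<Rightarrow> complex)) \<Rightarrow>
   ('b \<Rightarrow> ('a \<Rightarrow> complex) \<Rightarrow> ('a \<Rightarrow> complex)) \<Rightarrow> bool" where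
  "unitarily_equiv D \<pi> \<pi>' \<longleftrightarrow> (\<exists>U. unitary_op D D U \<and>
     (\<forall>a. \<forall>f\<in>l2 D. U (\<pi> a f) = \<pi>' a (U f)))"

definition rclass ::
  "(complex \<Rightarrow> 'a::{real_normed_algebra_1,banach} \<Rightarrow> 'a) \<Rightarrow> ('a \<Rightarrow> 'a) \<Rightarrow> 'a set \<Rightarrow>
   ('a \<Rightarrow> ('a \<Rightarrow> complex) \<Rightarrow> ('a \<Rightarrow> complex)) \<Rightarrow>
   ('a \<Rightarrow> ('a \<Rightarrow> complex) \<Rightarrow> ('a \<Rightarrow> complex)) set" where
  "rclass smul st D \<rho> = {\<rho>' \<in> railway smul st D. unitarily_equiv D \<rho> \<rho>'}"

text \<open>Open sets of the quotient topology on A-hat = R(A)/~.\<close>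

definition openin_spectrum ::
  "(complex \<Rightarrow> 'a::{real_normed_algebra_1,banach} \<Rightarrow> 'a) \<Rightarrow> ('a \<Rightarrow> 'a) \<Rightarrow> 'a set \<Rightarrow>
   ('a \<Rightarrow> ('a \<Rightarrow> complex) \<Rightarrow> ('a \<Rightarrow> complex)) set set \<Rightarrow> bool" where
  "openin_spectrum smul st D V \<longleftrightarrow>
     V \<subseteq> rclass smul st D ` railway smul st D \<and>
     openin (railway_topology smul st D) {\<rho> \<in> railway smul st D. rclass smul st D \<rho> \<in> V}"

end

theory Submission imports Defs begin

text \<open>The railway representations whose class lies in U(\<rho> | a, \<xi>, \<epsilon>) form the saturation,
  under unitary equivalence, of a basic open set of R(A). If \<sigma> lies in that basic set and
  \<sigma>' = U \<sigma> U* for a unitary U, conjugating by U* maps the basic neighbourhood of \<sigma>' at the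
  vector U \<xi> into the basic neighbourhood of \<sigma> at \<xi> of the same radius, because unitaries are
  isometric; the triangle inequality then keeps that neighbourhood inside the saturation.\<close>

lemma cmod_add_sq_le: "(cmod (x + y))\<^sup>2 \<le> 2 * (cmod x)\<^sup>2 + 2 * (cmod y)\<^sup>2"
proof -
  have "(cmod (x + y))\<^sup>2 \<le> (cmod x + cmod y)\<^sup>2"
    by (simp add: power_mono norm_triangle_ineq)
  also have "\<dots> \<le> 2 * (cmod x)\<^sup>2 + 2 * (cmod y)\<^sup>2"
    using zero_le_power2[of "cmod x - cmod y"] unfolding power2_sum power2_diff by linarith
  finally show ?thesis .
qed

lemma l2_add: assumes "f \<in> l2 I" "g \<in> l2 I" shows "(\<lambda>i. f i + g i) \<in> l2 I"
proof -
  have "(\<lambda>i. 2 * (cmod (f i))\<^sup>2 + 2 * (cmod (g i))\<^sup>2) summable_on I"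
    using assms by (intro summable_on_add summable_on_cmult_right) (auto simp: l2_def)
  then have "(\<lambda>i. (cmod (f i + g i))\<^sup>2) summable_on I"
    by (rule summable_on_comparison_test) (simp_all add: cmod_add_sq_le)
  then show ?thesis using assms by (auto simp: l2_def)
qed

lemma l2_scale: assumes "f \<in> l2 I" shows "(\<lambda>i. c * f i) \<in> l2 I"
proof -
  have "(\<lambda>i. (cmod c)\<^sup>2 * (cmod (f i))\<^sup>2) summable_on I"
    using assms by (intro summable_on_cmult_right) (auto simp: l2_def)
  then show ?thesis using assms by (auto simp: l2_def norm_mult power_mult_distrib)
qed

lemma l2_diff: assumes "f \<in> l2 I" "g \<in> l2 I" shows "(\<lambda>i. f i - g i) \<in> l2 I"
  using l2_add[OF assms(1) l2_scale[OF assms(2), of "-1"]] by simp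

lemma L2_set_le_l2norm:
  assumes "f \<in> l2 I" "finite F" "F \<subseteq> I"
  shows "L2_set (\<lambda>i. cmod (f i)) F \<le> l2norm I f"
  unfolding L2_set_def l2norm_def
  using assms by (intro real_sqrt_le_mono finite_sum_le_infsum) (auto simp: l2_def)

lemma l2norm_triangle:
  assumes "f \<in> l2 I" "g \<in> l2 I"
  shows "l2norm I (\<lambda>i. f i + g i) \<le> l2norm I f + l2norm I g"
proof -
  let ?h = "\<lambda>i. (cmod (f i + g i))\<^sup>2"
  have "infsum ?h I \<le> (l2norm I f + l2norm I g)\<^sup>2"
  proof (rule infsum_le_finite_sums)
    show "?h summable_on I" using l2_add[OF assms] by (simp add: l2_def)
  next
    fix F assume F: "finite F" "F \<subseteq> I"
    have "L2_set (\<lambda>i. cmod (f i + g i)) F \<le> L2_set (\<lambda>i. cmod (f i) + cmod (g i)) F"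
      by (rule L2_set_mono) (auto intro: norm_triangle_ineq)
    also have "\<dots> \<le> L2_set (\<lambda>i. cmod (f i)) F + L2_set (\<lambda>i. cmod (g i)) F"
      by (rule L2_set_triangle_ineq)
    also have "\<dots> \<le> l2norm I f + l2norm I g"
      using L2_set_le_l2norm[OF assms(1) F] L2_set_le_l2norm[OF assms(2) F] by linarith
    finally have "L2_set (\<lambda>i. cmod (f i + g i)) F \<le> l2norm I f + l2norm I g" .
    then have "(L2_set (\<lambda>i. cmod (f i + g i)) F)\<^sup>2 \<le> (l2norm I f + l2norm I g)\<^sup>2"
      by (intro power_mono) auto
    then show "sum ?h F \<le> (l2norm I f + l2norm I g)\<^sup>2"
      unfolding L2_set_def by (simp add: sum_nonneg)
  qed
  then have "sqrt (infsum ?h I) \<le> sqrt ((l2norm I f + l2norm I g)\<^sup>2)"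
    by (rule real_sqrt_le_mono)
  then show ?thesis by (simp add: l2norm_def infsum_nonneg)
qed

lemma l2norm_triangle_diff:
  assumes "x \<in> l2 I" "y \<in> l2 I" "z \<in> l2 I"
  shows "l2norm I (\<lambda>i. x i - z i) \<le> l2norm I (\<lambda>i. x i - y i) + l2norm I (\<lambda>i. y i - z i)"
  using l2norm_triangle[OF l2_diff[OF assms(1,2)] l2_diff[OF assms(2,3)]] by simp

lemma l2norm_nonneg: "l2norm I f \<ge> 0"
  by (simp add: l2norm_def infsum_nonneg)

lemma l2norm_zero [simp]: "l2norm I (\<lambda>i. 0) = 0"
  by (simp add: l2norm_def)

lemma l2norm_diff_commute: "l2norm I (\<lambda>i. x i - y i) = l2norm I (\<lambda>i. y i - x i)"
  by (simp add: l2norm_def norm_minus_commute)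

lemma l2inner_self:
  assumes "f \<in> l2 I"
  shows "l2inner I f f = complex_of_real ((l2norm I f)\<^sup>2)"
proof -
  have "cnj (f i) * f i = complex_of_real ((cmod (f i))\<^sup>2)" for i
    using complex_norm_square[of "f i"] by (simp add: mult.commute)
  then have "l2inner I f f = infsum (\<lambda>i. complex_of_real ((cmod (f i))\<^sup>2)) I"
    by (simp add: l2inner_def)
  also have "\<dots> = complex_of_real (infsum (\<lambda>i. (cmod (f i))\<^sup>2) I)"
    using assms by (intro infsumI has_sum_of_real has_sum_infsum) (simp add: l2_def)
  finally show ?thesis by (simp add: l2norm_def infsum_nonneg)
qed

lemma l2norm_eq_0_iff: assumes "f \<in> l2 I" shows "l2norm I f = 0 \<longleftrightarrow> f = (\<lambda>i. 0)"
proof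
  assume norm0: "l2norm I f = 0"
  show "f = (\<lambda>i. 0)"
  proof
    fix i show "f i = 0"
    proof (cases "i \<in> I")
      case True
      have "infsum (\<lambda>i. (cmod (f i))\<^sup>2) I \<le> 0"
        using norm0 by (simp add: l2norm_def infsum_nonneg)
      from nonneg_infsum_le_0D[OF this _ _ True] assms show ?thesis by (simp add: l2_def)
    qed (use assms in \<open>simp add: l2_def\<close>)
  qed
qed simp

lemma unitary_l2: "unitary_op I K U \<Longrightarrow> f \<in> l2 I \<Longrightarrow> U f \<in> l2 K"
  by (auto simp: unitary_op_def)

lemma unitary_add: "unitary_op I K U \<Longrightarrow> f \<in> l2 I \<Longrightarrow> g \<in> l2 I \<Longrightarrow>
    U (\<lambda>i. f i + g i) = (\<lambda>k. U f k + U g k)"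
  by (auto simp: unitary_op_def)

lemma unitary_scale: "unitary_op I K U \<Longrightarrow> f \<in> l2 I \<Longrightarrow>
    U (\<lambda>i. c * f i) = (\<lambda>k. c * U f k)"
  by (auto simp: unitary_op_def)

lemma unitary_inner: "unitary_op I K U \<Longrightarrow> f \<in> l2 I \<Longrightarrow> g \<in> l2 I \<Longrightarrow>
    l2inner K (U f) (U g) = l2inner I f g"
  by (auto simp: unitary_op_def)

lemma unitary_diff:
  assumes "unitary_op I K U" "f \<in> l2 I" "g \<in> l2 I"
  shows "U (\<lambda>i. f i - g i) = (\<lambda>k. U f k - U g k)"
  using unitary_add[OF assms(1,2) l2_scale[OF assms(3)], of "-1"]
    unitary_scale[OF assms(1,3), of "-1"] by simp

lemma unitary_norm:
  assumes "unitary_op I K U" "f \<in> l2 I"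
  shows "l2norm K (U f) = l2norm I f"
proof -
  have "(l2norm K (U f))\<^sup>2 = (l2norm I f)\<^sup>2"
    using l2inner_self[OF unitary_l2[OF assms]] l2inner_self[OF assms(2)]
      unitary_inner[OF assms(1,2,2)] by (simp only: of_real_eq_iff)
  then show ?thesis using l2norm_nonneg[of K "U f"] l2norm_nonneg[of I f]
    by (simp add: power2_eq_iff_nonneg)
qed

lemma unitary_norm_diff:
  assumes "unitary_op I K U" "f \<in> l2 I" "g \<in> l2 I"
  shows "l2norm K (\<lambda>k. U f k - U g k) = l2norm I (\<lambda>i. f i - g i)"
  using unitary_norm[OF assms(1) l2_diff[OF assms(2,3)]] unitary_diff[OF assms] by simp

lemma unitary_inj: assumes "unitary_op I K U" shows "inj_on U (l2 I)"
proof (rule inj_onI)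
  fix f g assume f: "f \<in> l2 I" and g: "g \<in> l2 I" and "U f = U g"
  then have "l2norm I (\<lambda>i. f i - g i) = 0"
    using unitary_norm_diff[OF assms f g] by (simp add: l2norm_def)
  then have "(\<lambda>i. f i - g i) = (\<lambda>i. 0)" by (simp add: l2norm_eq_0_iff l2_diff f g)
  then show "f = g" by (simp add: fun_eq_iff)
qed

text \<open>The inverse of a unitary U from l2(I) onto l2(K); its values off l2(K) are junk.\<close>

definition uinv :: "'i set \<Rightarrow> (('i \<Rightarrow> complex) \<Rightarrow> ('k \<Rightarrow> complex)) \<Rightarrow> ('k \<Rightarrow> complex) \<Rightarrow> ('i \<Rightarrow> complex)"
  where "uinv I U = inv_into (l2 I) U"

lemma uinv_l2: "unitary_op I K U \<Longrightarrow> x \<in> l2 K \<Longrightarrow> uinv I U x \<in> l2 I"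
  unfolding uinv_def unitary_op_def by (metis inv_into_into)

lemma uinv_right: "unitary_op I K U \<Longrightarrow> x \<in> l2 K \<Longrightarrow> U (uinv I U x) = x"
  unfolding uinv_def unitary_op_def by (metis f_inv_into_f)

lemma uinv_left: "unitary_op I K U \<Longrightarrow> f \<in> l2 I \<Longrightarrow> uinv I U (U f) = f"
  unfolding uinv_def by (rule inv_into_f_f[OF unitary_inj])

lemma unitary_uinv: assumes U: "unitary_op I K U" shows "unitary_op K I (uinv I U)"
  unfolding unitary_op_def
proof (intro conjI ballI allI)
  show "uinv I U ` l2 K = l2 I"
    using uinv_l2[OF U] uinv_left[OF U] unitary_l2[OF U] by (force intro: image_eqI)
next
  fix x y assume x: "x \<in> l2 K" and y: "y \<in> l2 K"
  have "U (\<lambda>i. uinv I U x i + uinv I U y i) = (\<lambda>i. x i + y i)"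
    using unitary_add[OF U uinv_l2[OF U x] uinv_l2[OF U y]] uinv_right[OF U x] uinv_right[OF U y]
    by simp
  then show "uinv I U (\<lambda>i. x i + y i) = (\<lambda>k. uinv I U x k + uinv I U y k)"
    by (metis uinv_left[OF U l2_add[OF uinv_l2[OF U x] uinv_l2[OF U y]]])
  show "l2inner I (uinv I U x) (uinv I U y) = l2inner K x y"
    using unitary_inner[OF U uinv_l2[OF U x] uinv_l2[OF U y]] uinv_right[OF U x] uinv_right[OF U y]
    by simp
next
  fix c x assume x: "x \<in> l2 K"
  have "U (\<lambda>i. c * uinv I U x i) = (\<lambda>i. c * x i)"
    using unitary_scale[OF U uinv_l2[OF U x]] uinv_right[OF U x] by simp
  then show "uinv I U (\<lambda>i. c * x i) = (\<lambda>k. c * uinv I U x k)"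
    by (metis uinv_left[OF U l2_scale[OF uinv_l2[OF U x]]])
qed

lemma unitary_comp:
  assumes U: "unitary_op I K U" and V: "unitary_op K L V"
  shows "unitary_op I L (\<lambda>f. V (U f))"
  using assms unitary_l2[OF U]
  unfolding unitary_op_def by (simp add: image_image[symmetric])

lemma unitarily_equiv_refl: "unitarily_equiv D \<pi> \<pi>"
  unfolding unitarily_equiv_def by (rule exI[of _ "\<lambda>f. f"]) (simp add: unitary_op_def)

lemma unitarily_equiv_trans:
  assumes "unitarily_equiv D \<pi> \<pi>'" "unitarily_equiv D \<pi>' \<pi>''"
  shows "unitarily_equiv D \<pi> \<pi>''"
proof -
  obtain U where U: "unitary_op D D U" "\<forall>a. \<forall>f\<in>l2 D. U (\<pi> a f) = \<pi>' a (U f)"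
    using assms(1) unfolding unitarily_equiv_def by blast
  obtain V where V: "unitary_op D D V" "\<forall>a. \<forall>f\<in>l2 D. V (\<pi>' a f) = \<pi>'' a (V f)"
    using assms(2) unfolding unitarily_equiv_def by blast
  show ?thesis
    unfolding unitarily_equiv_def
    using unitary_comp[OF U(1) V(1)] U V unitary_l2[OF U(1)] by auto
qed

lemma unitarily_equiv_sym:
  assumes "unitarily_equiv D \<pi> \<pi>'" and closed: "\<And>a f. f \<in> l2 D \<Longrightarrow> \<pi> a f \<in> l2 D"
  shows "unitarily_equiv D \<pi>' \<pi>"
proof -
  obtain U where U: "unitary_op D D U" "\<forall>a. \<forall>f\<in>l2 D. U (\<pi> a f) = \<pi>' a (U f)"
    using assms(1) unfolding unitarily_equiv_def by blast
  have "uinv D U (\<pi>' a g) = \<pi> a (uinv D U g)" if g: "g \<in> l2 D" for a g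
  proof -
    have "\<pi>' a g = U (\<pi> a (uinv D U g))"
      using U(2) uinv_l2[OF U(1) g] uinv_right[OF U(1) g] by metis
    then show ?thesis using uinv_left[OF U(1) closed[OF uinv_l2[OF U(1) g]]] by simp
  qed
  then show ?thesis unfolding unitarily_equiv_def using unitary_uinv[OF U(1)] by blast
qed

lemma bounded_op_l2: "bounded_op I T \<Longrightarrow> f \<in> l2 I \<Longrightarrow> T f \<in> l2 I"
  by (simp add: bounded_op_def)

lemma is_rep_l2: "is_rep smul st I \<pi> \<Longrightarrow> f \<in> l2 I \<Longrightarrow> \<pi> a f \<in> l2 I"
  by (simp add: is_rep_def bounded_op_def)

lemma railway_bounded_op: "\<pi> \<in> railway smul st D \<Longrightarrow> bounded_op D (\<pi> a)"
  by (simp add: railway_def is_rep_def)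

lemma railway_l2: "\<pi> \<in> railway smul st D \<Longrightarrow> f \<in> l2 D \<Longrightarrow> \<pi> a f \<in> l2 D"
  by (rule bounded_op_l2[OF railway_bounded_op])

text \<open>The operator U* T U, extended by 0 off l2(I) as required by bounded_op.\<close>

definition conj_op ::
  "'i set \<Rightarrow> (('i \<Rightarrow> complex) \<Rightarrow> ('k \<Rightarrow> complex)) \<Rightarrow> (('k \<Rightarrow> complex) \<Rightarrow> ('k \<Rightarrow> complex)) \<Rightarrow>
   ('i \<Rightarrow> complex) \<Rightarrow> ('i \<Rightarrow> complex)" where
  "conj_op I U T f = (if f \<in> l2 I then uinv I U (T (U f)) else (\<lambda>i. 0))"

lemma conj_op_l2:
  "unitary_op I K U \<Longrightarrow> bounded_op K T \<Longrightarrow> f \<in> l2 I \<Longrightarrow> conj_op I U T f \<in> l2 I"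
  by (simp add: conj_op_def uinv_l2 bounded_op_l2 unitary_l2)

lemma unitary_conj_op:
  "unitary_op I K U \<Longrightarrow> bounded_op K T \<Longrightarrow> f \<in> l2 I \<Longrightarrow> U (conj_op I U T f) = T (U f)"
  by (simp add: conj_op_def uinv_right bounded_op_l2 unitary_l2)

lemma bounded_op_conj_op:
  assumes U: "unitary_op I K U" and T: "bounded_op K T"
  shows "bounded_op I (conj_op I U T)"
proof -
  let ?V = "uinv I U"
  have V: "unitary_op K I ?V" by (rule unitary_uinv[OF U])
  have Ul2: "U f \<in> l2 K" and TUl2: "T (U f) \<in> l2 K" if "f \<in> l2 I" for f
    using that U T by (simp_all add: unitary_l2 bounded_op_l2)
  have add: "conj_op I U T (\<lambda>i. f i + g i) = (\<lambda>i. conj_op I U T f i + conj_op I U T g i)"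
    if f: "f \<in> l2 I" and g: "g \<in> l2 I" for f g
    using f g l2_add[OF f g] unitary_add[OF U f g] unitary_add[OF V TUl2[OF f] TUl2[OF g]]
      T Ul2 by (simp add: conj_op_def bounded_op_def)
  have scale: "conj_op I U T (\<lambda>i. c * f i) = (\<lambda>i. c * conj_op I U T f i)"
    if f: "f \<in> l2 I" for c f
    using f l2_scale[OF f] unitary_scale[OF U f] unitary_scale[OF V TUl2[OF f]]
      T Ul2 by (simp add: conj_op_def bounded_op_def)
  obtain C where C: "\<forall>g\<in>l2 K. l2norm K (T g) \<le> C * l2norm K g"
    using T by (auto simp: bounded_op_def)
  have "l2norm I (conj_op I U T f) \<le> C * l2norm I f" if f: "f \<in> l2 I" for f
  proof -
    have "l2norm I (conj_op I U T f) = l2norm K (T (U f))"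
      using f unitary_norm[OF V TUl2[OF f]] by (simp add: conj_op_def)
    also have "\<dots> \<le> C * l2norm K (U f)" using C Ul2[OF f] by blast
    finally show ?thesis using unitary_norm[OF U f] by simp
  qed
  then show ?thesis
    unfolding bounded_op_def using add scale conj_op_l2[OF U T]
    by (auto simp: conj_op_def)
qed

lemma is_rep_conj_op:
  assumes U: "unitary_op I K U" and \<pi>: "is_rep smul st K \<pi>"
  shows "is_rep smul st I (\<lambda>a. conj_op I U (\<pi> a))"
proof -
  let ?V = "uinv I U"
  have V: "unitary_op K I ?V" by (rule unitary_uinv[OF U])
  have T: "bounded_op K (\<pi> a)" for a using \<pi> by (simp add: is_rep_def)
  have Ul2: "U f \<in> l2 K" and \<pi>Ul2: "\<pi> a (U f) \<in> l2 K" if "f \<in> l2 I" for a f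
    using that U \<pi> by (simp_all add: unitary_l2 is_rep_l2)
  show ?thesis
    unfolding is_rep_def
  proof (intro conjI ballI allI)
    fix a show "bounded_op I (conj_op I U (\<pi> a))" by (rule bounded_op_conj_op[OF U T])
  next
    fix a b f assume f: "f \<in> l2 I"
    show "conj_op I U (\<pi> (a + b)) f = (\<lambda>i. conj_op I U (\<pi> a) f i + conj_op I U (\<pi> b) f i)"
      using f \<pi> Ul2[OF f] unitary_add[OF V \<pi>Ul2[OF f] \<pi>Ul2[OF f]]
      by (simp add: conj_op_def is_rep_def)
  next
    fix c a f assume f: "f \<in> l2 I"
    show "conj_op I U (\<pi> (smul c a)) f = (\<lambda>i. c * conj_op I U (\<pi> a) f i)"
      using f \<pi> Ul2[OF f] unitary_scale[OF V \<pi>Ul2[OF f]]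
      by (simp add: conj_op_def is_rep_def)
  next
    fix a b f assume f: "f \<in> l2 I"
    have "conj_op I U (\<pi> a) (conj_op I U (\<pi> b) f) = ?V (\<pi> a (\<pi> b (U f)))"
      using conj_op_l2[OF U T f] unitary_conj_op[OF U T f] by (simp add: conj_op_def)
    also have "\<dots> = conj_op I U (\<pi> (a * b)) f"
      using f \<pi> Ul2[OF f] by (simp add: conj_op_def is_rep_def)
    finally show "conj_op I U (\<pi> (a * b)) f = conj_op I U (\<pi> a) (conj_op I U (\<pi> b) f)" ..
  next
    fix a f g assume f: "f \<in> l2 I" and g: "g \<in> l2 I"
    have "l2inner I (conj_op I U (\<pi> (st a)) f) g = l2inner I (?V (\<pi> (st a) (U f))) (?V (U g))"
      using f g uinv_left[OF U g] by (simp add: conj_op_def)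
    also have "\<dots> = l2inner K (\<pi> (st a) (U f)) (U g)"
      by (rule unitary_inner[OF V \<pi>Ul2[OF f] Ul2[OF g]])
    also have "\<dots> = l2inner K (U f) (\<pi> a (U g))"
      using \<pi> Ul2[OF f] Ul2[OF g] by (simp add: is_rep_def)
    also have "\<dots> = l2inner I (?V (U f)) (?V (\<pi> a (U g)))"
      by (rule unitary_inner[OF V Ul2[OF f] \<pi>Ul2[OF g], symmetric])
    also have "\<dots> = l2inner I f (conj_op I U (\<pi> a) g)"
      using f g uinv_left[OF U f] by (simp add: conj_op_def)
    finally show "l2inner I (conj_op I U (\<pi> (st a)) f) g = l2inner I f (conj_op I U (\<pi> a) g)" .
  qed
qed

lemma railway_conj_op:
  assumes U: "unitary_op D D U" and \<pi>: "\<pi> \<in> railway smul st D"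
  shows "(\<lambda>a. conj_op D U (\<pi> a)) \<in> railway smul st D"
proof -
  have rep: "is_rep smul st D \<pi>" using \<pi> by (simp add: railway_def)
  obtain J \<sigma> and W :: "('a \<Rightarrow> complex) \<Rightarrow> ('a \<times> 'a \<Rightarrow> complex)" where
    \<sigma>: "irreducible_rep smul st J \<sigma>" and W: "unitary_op D (D \<times> J) W"
    and amp: "\<forall>a. \<forall>f\<in>l2 D. W (\<pi> a f) = ampliation D J \<sigma> a (W f)"
    using \<pi> unfolding railway_def by blast
  have "W (U (conj_op D U (\<pi> a) f)) = ampliation D J \<sigma> a (W (U f))" if "f \<in> l2 D" for a f
    using that amp rep unitary_conj_op[OF U] unitary_l2[OF U] by (simp add: is_rep_def)
  then show ?thesis
    unfolding railway_def using is_rep_conj_op[OF U rep] \<sigma> unitary_comp[OF U W] by blast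
qed

lemma unitarily_equiv_conj_op:
  assumes "unitary_op D D U" and "\<And>a. bounded_op D (\<pi> a)"
  shows "unitarily_equiv D (\<lambda>a. conj_op D U (\<pi> a)) \<pi>"
  unfolding unitarily_equiv_def using assms unitary_conj_op by blast

lemma l2norm_diff_conj_op:
  assumes U: "unitary_op I K U" and intertw: "\<forall>f\<in>l2 I. U (S f) = T (U f)"
    and S: "bounded_op I S" and T: "bounded_op K T'" and \<xi>: "\<xi> \<in> l2 I"
  shows "l2norm I (\<lambda>i. S \<xi> i - conj_op I U T' \<xi> i) = l2norm K (\<lambda>k. T (U \<xi>) k - T' (U \<xi>) k)"
  using unitary_norm_diff[OF U bounded_op_l2[OF S \<xi>] conj_op_l2[OF U T \<xi>]]
    intertw unitary_conj_op[OF U T \<xi>] \<xi> by simp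

lemma l2norm_diff_conj_op_le:
  assumes U: "unitary_op D D U" and intertw: "\<forall>b. \<forall>f\<in>l2 D. U (\<sigma> b f) = \<sigma>' b (U f)"
    and \<rho>: "\<rho> \<in> railway smul st D" and \<sigma>: "\<sigma> \<in> railway smul st D"
    and \<pi>: "\<pi> \<in> railway smul st D" and \<xi>: "\<xi> \<in> l2 D"
  shows "l2norm D (\<lambda>i. \<rho> a \<xi> i - conj_op D U (\<pi> a) \<xi> i)
         \<le> l2norm D (\<lambda>i. \<rho> a \<xi> i - \<sigma> a \<xi> i) + l2norm D (\<lambda>i. \<pi> a (U \<xi>) i - \<sigma>' a (U \<xi>) i)"
proof -
  have "l2norm D (\<lambda>i. \<rho> a \<xi> i - conj_op D U (\<pi> a) \<xi> i)
        \<le> l2norm D (\<lambda>i. \<rho> a \<xi> i - \<sigma> a \<xi> i) + l2norm D (\<lambda>i. \<sigma> a \<xi> i - conj_op D U (\<pi> a) \<xi> i)"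
    using railway_l2[OF \<rho> \<xi>] railway_l2[OF \<sigma> \<xi>] conj_op_l2[OF U railway_bounded_op[OF \<pi>] \<xi>]
    by (rule l2norm_triangle_diff)
  also have "l2norm D (\<lambda>i. \<sigma> a \<xi> i - conj_op D U (\<pi> a) \<xi> i)
             = l2norm D (\<lambda>i. \<sigma>' a (U \<xi>) i - \<pi> a (U \<xi>) i)"
    using intertw \<xi>
    by (intro l2norm_diff_conj_op[OF U _ railway_bounded_op[OF \<sigma>] railway_bounded_op[OF \<pi>]]) blast
  finally show ?thesis
    using l2norm_diff_commute[of D "\<sigma>' a (U \<xi>)" "\<pi> a (U \<xi>)"] by simp
qed

lemma rclass_eq_if_unitarily_equiv:
  assumes "\<pi>' \<in> railway smul st D" and "unitarily_equiv D \<pi>' \<pi>"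
  shows "rclass smul st D \<pi> = rclass smul st D \<pi>'"
proof -
  have "unitarily_equiv D \<pi> \<pi>'"
    using assms by (blast intro: unitarily_equiv_sym railway_l2)
  then show ?thesis
    unfolding rclass_def using assms(2) by (blast intro: unitarily_equiv_trans)
qed

lemma rclass_in_rclass_image_iff:
  assumes "\<pi> \<in> railway smul st D"
  shows "rclass smul st D \<pi> \<in> rclass smul st D ` {\<sigma> \<in> railway smul st D. P \<sigma>} \<longleftrightarrow>
         (\<exists>\<sigma> \<in> railway smul st D. P \<sigma> \<and> unitarily_equiv D \<sigma> \<pi>)"
proof
  assume "rclass smul st D \<pi> \<in> rclass smul st D ` {\<sigma> \<in> railway smul st D. P \<sigma>}"
  then obtain \<sigma> where "\<sigma> \<in> railway smul st D" "P \<sigma>"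
    and "rclass smul st D \<pi> = rclass smul st D \<sigma>" by blast
  moreover have "\<pi> \<in> rclass smul st D \<pi>"
    using assms unitarily_equiv_refl by (simp add: rclass_def)
  ultimately show "\<exists>\<sigma> \<in> railway smul st D. P \<sigma> \<and> unitarily_equiv D \<sigma> \<pi>"
    by (auto simp: rclass_def)
qed (blast dest: rclass_eq_if_unitarily_equiv)

lemma openin_railway_ball:
  assumes "\<pi> \<in> railway smul st D" and "\<xi> \<in> l2 D" and "e > 0"
  shows "openin (railway_topology smul st D)
           {\<pi>' \<in> railway smul st D. l2norm D (\<lambda>i. \<pi>' a \<xi> i - \<pi> a \<xi> i) < e}"
  unfolding railway_topology_def by (rule topology_generated_by_Basis) (use assms in blast)

lemma openin_railway_saturated_ball:
  assumes \<rho>: "\<rho> \<in> railway smul st D" and \<xi>: "\<xi> \<in> l2 D"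
  shows "openin (railway_topology smul st D)
           {\<pi> \<in> railway smul st D. \<exists>\<sigma> \<in> railway smul st D. unitarily_equiv D \<sigma> \<pi> \<and>
              l2norm D (\<lambda>i. \<rho> a \<xi> i - \<sigma> a \<xi> i) < \<epsilon>}"
    (is "openin ?\<T> ?S")
proof (subst openin_subopen, intro ballI)
  fix \<pi>\<^sub>2 assume "\<pi>\<^sub>2 \<in> ?S"
  then obtain \<sigma> where \<pi>\<^sub>2: "\<pi>\<^sub>2 \<in> railway smul st D" and \<sigma>: "\<sigma> \<in> railway smul st D"
    and "unitarily_equiv D \<sigma> \<pi>\<^sub>2" and close: "l2norm D (\<lambda>i. \<rho> a \<xi> i - \<sigma> a \<xi> i) < \<epsilon>"
    by blast
  then obtain U where U: "unitary_op D D U" and intertw: "\<forall>b. \<forall>f\<in>l2 D. U (\<sigma> b f) = \<pi>\<^sub>2 b (U f)"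
    unfolding unitarily_equiv_def by blast
  define \<delta> where "\<delta> = \<epsilon> - l2norm D (\<lambda>i. \<rho> a \<xi> i - \<sigma> a \<xi> i)"
  define N where "N = {\<pi> \<in> railway smul st D. l2norm D (\<lambda>i. \<pi> a (U \<xi>) i - \<pi>\<^sub>2 a (U \<xi>) i) < \<delta>}"
  have "N \<subseteq> ?S"
  proof
    fix \<pi> assume "\<pi> \<in> N"
    then have \<pi>: "\<pi> \<in> railway smul st D"
      and near: "l2norm D (\<lambda>i. \<pi> a (U \<xi>) i - \<pi>\<^sub>2 a (U \<xi>) i) < \<delta>"
      by (auto simp: N_def)
    let ?\<pi>' = "\<lambda>b. conj_op D U (\<pi> b)"
    have "l2norm D (\<lambda>i. \<rho> a \<xi> i - ?\<pi>' a \<xi> i) < \<epsilon>"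
      using l2norm_diff_conj_op_le[OF U intertw \<rho> \<sigma> \<pi> \<xi>, where a = a] near by (simp add: \<delta>_def)
    moreover have "unitarily_equiv D ?\<pi>' \<pi>"
      using U \<pi> by (intro unitarily_equiv_conj_op railway_bounded_op)
    ultimately show "\<pi> \<in> ?S" using \<pi> railway_conj_op[OF U \<pi>] by blast
  qed
  moreover have "openin ?\<T> N"
    unfolding N_def using \<pi>\<^sub>2 unitary_l2[OF U \<xi>] close by (intro openin_railway_ball) (simp_all add: \<delta>_def)
  moreover have "\<pi>\<^sub>2 \<in> N"
    using \<pi>\<^sub>2 close by (simp add: N_def \<delta>_def)
  ultimately show "\<exists>T. openin ?\<T> T \<and> \<pi>\<^sub>2 \<in> T \<and> T \<subseteq> ?S" by blast
qed

theorem proposition4p8: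
  fixes smul :: "complex \<Rightarrow> 'a::{real_normed_algebra_1,banach} \<Rightarrow> 'a"
    and st :: "'a \<Rightarrow> 'a"
    and D :: "'a set"
    and \<rho> :: "'a \<Rightarrow> ('a \<Rightarrow> complex) \<Rightarrow> ('a \<Rightarrow> complex)"
    and a :: 'a and \<xi> :: "'a \<Rightarrow> complex" and \<epsilon> :: real
  assumes "unital_cstar_algebra smul st"
    and "minimal_dense D"
    and "\<rho> \<in> railway smul st D"
    and "\<xi> \<in> l2 D"
    and "\<epsilon> > 0"
  shows "openin_spectrum smul st D
           {rclass smul st D \<rho>' | \<rho>'. \<rho>' \<in> railway smul st D \<and>
              l2norm D (\<lambda>i. \<rho> a \<xi> i - \<rho>' a \<xi> i) < \<epsilon>}"
    (is "openin_spectrum smul st D ?V")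
proof -
  let ?R = "railway smul st D"
  have V: "?V = rclass smul st D ` {\<sigma> \<in> ?R. l2norm D (\<lambda>i. \<rho> a \<xi> i - \<sigma> a \<xi> i) < \<epsilon>}"
    by blast
  have "{\<pi> \<in> ?R. rclass smul st D \<pi> \<in> ?V} =
      {\<pi> \<in> ?R. \<exists>\<sigma> \<in> ?R. unitarily_equiv D \<sigma> \<pi> \<and> l2norm D (\<lambda>i. \<rho> a \<xi> i - \<sigma> a \<xi> i) < \<epsilon>}"
    unfolding V
    using rclass_in_rclass_image_iff[where P = "\<lambda>\<sigma>. l2norm D (\<lambda>i. \<rho> a \<xi> i - \<sigma> a \<xi> i) < \<epsilon>"]
    by blast
  then show ?thesis
    unfolding openin_spectrum_def V
    using openin_railway_saturated_ball[OF assms(3,4)] by auto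
qed

end
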